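(* Let $g\in L^2(\mathbb R)$, $a,b>0$, and suppose $(g,a,b)$ is a preframe system with upper frame bound $B$. Then for a.e. $t\in\mathbb R$, $$\sum_{n\in\mathbb Z}\big|\langle g,T_{na}g\rangle_{1/b}(t)\big|^2\le b\,B\,\|g\|_{1/b}(t).$$
   Context: $T_{a}g(t)=g(t-a)$, $E_{b}g(t)=e^{2\pi i bt}g(t)$. $(g,a,b)$ is preframe (PF) with upper frame bound $B$ if $\sum_{m,n\in\mathbb Z}|\langle f,E_{mb}T_{na}g\rangle|^2\le B\|f\|^2$ for all $f\in L^2(\mathbb R)$. The $\frac1b$-inner product is $\langle f,h\rangle_{1/b}(t)=\sum_{k\in\mathbb Z}f(t-k/b)\overline{h(t-k/b)}$ and $\|f\|_{1/b}(t)=\sum_{k\in\mathbb Z}|f(t-k/b)|^2$. *)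

theory Defs
  imports "HOL-Analysis.Analysis"
begin

definition L2 :: "(real \<Rightarrow> complex) set" where
  "L2 = {f. f \<in> borel_measurable lebesgue \<and> integrable lebesgue (\<lambda>t. (cmod (f t))\<^sup>2)}"

definition L2_inner :: "(real \<Rightarrow> complex) \<Rightarrow> (real \<Rightarrow> complex) \<Rightarrow> complex" where
  "L2_inner f h = (LINT t|lebesgue. f t * cnj (h t))"

definition L2_norm_sq :: "(real \<Rightarrow> complex) \<Rightarrow> real" where
  "L2_norm_sq f = (LINT t|lebesgue. (cmod (f t))\<^sup>2)"

definition transl :: "real \<Rightarrow> (real \<Rightarrow> complex) \<Rightarrow> real \<Rightarrow> complex" where
  "transl a g = (\<lambda>t. g (t - a))"

definition modul :: "real \<Rightarrow> (real \<Rightarrow> complex) \<Rightarrow> real \<Rightarrow> complex" where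
  "modul b g = (\<lambda>t. cis (2 * pi * b * t) * g t)"

definition preframe :: "(real \<Rightarrow> complex) \<Rightarrow> real \<Rightarrow> real \<Rightarrow> real \<Rightarrow> bool" where
  "preframe g a b B \<longleftrightarrow>
     (\<forall>f\<in>L2.
        (\<lambda>(m::int, n::int). (cmod (L2_inner f (modul (of_int m * b) (transl (of_int n * a) g))))\<^sup>2)
          summable_on UNIV \<and>
        (\<Sum>\<^sub>\<infinity>(m::int, n::int). (cmod (L2_inner f (modul (of_int m * b) (transl (of_int n * a) g))))\<^sup>2)
          \<le> B * L2_norm_sq f)"

definition inner_b :: "real \<Rightarrow> (real \<Rightarrow> complex) \<Rightarrow> (real \<Rightarrow> complex) \<Rightarrow> real \<Rightarrow> complex" where
  "inner_b b f h t = (\<Sum>\<^sub>\<infinity>k::int. f (t - of_int k / b) * cnj (h (t - of_int k / b)))"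

text \<open>The 1/b-bracket norm, as an extended nonnegative real (may be infinite on a null set).\<close>
definition norm_b :: "real \<Rightarrow> (real \<Rightarrow> complex) \<Rightarrow> real \<Rightarrow> ennreal" where
  "norm_b b f t = (\<Sum>\<^sub>\<infinity>k::int. ennreal ((cmod (f (t - of_int k / b)))\<^sup>2))"

end

theory Submission
  imports Defs
begin

text \<open>
  For finitely many coefficients c_n, put u = sum_n c_n T_{na} g. For a 1/b-periodic
  trigonometric polynomial P the product P u is a finite combination of the Gabor system, so the
  upper frame bound controls its L^2 norm; periodizing over a window of length 1/b this becomes
  the weighted inequality  integral |P|^2 ||u||_{1/b} <= b B (sum_n |c_n|^2) integral |P|^2.
  Letting |P|^2 approximate the indicator of a short interval and applying Lebesgue
  differentiation gives ||u||_{1/b}(t) <= b B sum_n |c_n|^2 for almost every t, simultaneously for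
  a countable dense set of coefficient vectors. At such t, sum_n c_n conj <g, T_{na} g>_{1/b}(t)
  is the 1/b-inner product of u with g, so Cauchy-Schwarz and duality in c give the claim.
\<close>

section \<open>Nonnegative infinite sums over the integers\<close>

lemma infsum_cmult_right_ennreal:
  fixes f :: "'a \<Rightarrow> ennreal"
  shows "(\<Sum>\<^sub>\<infinity>x\<in>A. c * f x) = c * (\<Sum>\<^sub>\<infinity>x\<in>A. f x)"
proof -
  have "(\<Sum>\<^sub>\<infinity>x\<in>A. c * f x) = (SUP F\<in>{F. finite F \<and> F \<subseteq> A}. c * sum f F)"
    by (simp add: nonneg_infsum_complete sum_distrib_left)
  also have "\<dots> = c * (\<Sum>\<^sub>\<infinity>x\<in>A. f x)"
    by (simp add: nonneg_infsum_complete SUP_mult_left_ennreal)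
  finally show ?thesis .
qed

lemma sum_le_infsum_ennreal:
  fixes f :: "'a \<Rightarrow> ennreal"
  shows "finite F \<Longrightarrow> sum f F \<le> (\<Sum>\<^sub>\<infinity>k. f k)"
  unfolding nonneg_infsum_complete[of UNIV f, simplified] by (auto intro: SUP_upper)

lemma finite_int_subset_symmetric_interval:
  fixes F :: "int set"
  assumes "finite F"
  obtains j :: nat where "F \<subseteq> {-int j..int j}"
proof -
  obtain M where "\<forall>k\<in>F. \<bar>k\<bar> \<le> M"
    using bdd_above_finite[of "abs ` F"] assms by (auto simp: bdd_above_def)
  then have "F \<subseteq> {-int (nat M)..int (nat M)}"
    by (auto simp: abs_le_iff)
  then show ?thesis by (rule that)
qed

lemma infsum_int_ennreal_eq_SUP:
  fixes f :: "int \<Rightarrow> ennreal"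
  shows "(\<Sum>\<^sub>\<infinity>k. f k) = (SUP j::nat. \<Sum>k\<in>{-int j..int j}. f k)"
proof (rule antisym)
  show "(\<Sum>\<^sub>\<infinity>k. f k) \<le> (SUP j::nat. \<Sum>k\<in>{-int j..int j}. f k)"
    unfolding nonneg_infsum_complete[of UNIV f, simplified]
  proof (rule SUP_least, clarify)
    fix F :: "int set"
    assume "finite F"
    then obtain j where "F \<subseteq> {-int j..int j}"
      by (rule finite_int_subset_symmetric_interval)
    then have "sum f F \<le> (\<Sum>k\<in>{-int j..int j}. f k)"
      by (intro sum_mono2) auto
    also have "\<dots> \<le> (SUP j::nat. \<Sum>k\<in>{-int j..int j}. f k)"
      by (rule SUP_upper) simp
    finally show "sum f F \<le> (SUP j::nat. \<Sum>k\<in>{-int j..int j}. f k)" .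
  qed
  show "(SUP j::nat. \<Sum>k\<in>{-int j..int j}. f k) \<le> (\<Sum>\<^sub>\<infinity>k. f k)"
    by (intro SUP_least sum_le_infsum_ennreal) simp
qed

lemma borel_measurable_infsum_int_ennreal[measurable]:
  fixes f :: "int \<Rightarrow> 'a \<Rightarrow> ennreal"
  assumes [measurable]: "\<And>k. f k \<in> borel_measurable M"
  shows "(\<lambda>x. \<Sum>\<^sub>\<infinity>k. f k x) \<in> borel_measurable M"
  unfolding infsum_int_ennreal_eq_SUP by measurable

lemma nn_integral_infsum_int:
  fixes f :: "int \<Rightarrow> 'a \<Rightarrow> ennreal"
  assumes [measurable]: "\<And>k. f k \<in> borel_measurable M"
  shows "(\<integral>\<^sup>+x. (\<Sum>\<^sub>\<infinity>k. f k x) \<partial>M) = (\<Sum>\<^sub>\<infinity>k. \<integral>\<^sup>+x. f k x \<partial>M)"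
proof -
  have "(\<integral>\<^sup>+x. (\<Sum>\<^sub>\<infinity>k. f k x) \<partial>M) = (SUP j::nat. \<integral>\<^sup>+x. (\<Sum>k\<in>{-int j..int j}. f k x) \<partial>M)"
    unfolding infsum_int_ennreal_eq_SUP
    by (rule nn_integral_monotone_convergence_SUP) (auto simp: incseq_def le_fun_def intro!: sum_mono2)
  then show ?thesis
    by (simp add: nn_integral_sum infsum_int_ennreal_eq_SUP)
qed

lemma has_sum_sum:
  fixes f :: "'i \<Rightarrow> 'a \<Rightarrow> 'b::topological_comm_monoid_add"
  shows "finite I \<Longrightarrow> (\<And>i. i \<in> I \<Longrightarrow> (f i has_sum s i) A) \<Longrightarrow> ((\<lambda>x. \<Sum>i\<in>I. f i x) has_sum (\<Sum>i\<in>I. s i)) A"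
  by (induction I rule: finite_induct) (auto intro: has_sum_add)

section \<open>Measurability and periodization on the real line\<close>

lemma lebesgue_measurable_ident[measurable]: "(\<lambda>x::real. x) \<in> borel_measurable lebesgue"
  by (simp add: measurable_completion)

lemma lebesgue_measurable_diff_const[measurable]: "(\<lambda>x::real. x - c) \<in> lebesgue \<rightarrow>\<^sub>M lebesgue"
  using lebesgue_affine_measurable[of "\<lambda>_. 1" "-c"] by simp

lemma lebesgue_measurable_cis[measurable]: "(\<lambda>t::real. cis (c * t)) \<in> borel_measurable lebesgue"
proof -
  have "continuous_on UNIV (\<lambda>t::real. cis (c * t))"
    by (intro continuous_intros)
  from continuous_imp_measurable_on_sets_lebesgue[OF this] show ?thesis
    by (simp add: lebesgue_on_UNIV_eq)
qed

lemma borel_measurable_cnj[measurable]: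
  "f \<in> borel_measurable M \<Longrightarrow> (\<lambda>x. cnj (f x :: complex)) \<in> borel_measurable M"
  by (rule borel_measurable_continuous_on[of cnj]) (auto intro: continuous_intros)

text \<open>Each real number has exactly one translate by a multiple of 1/b in the window.\<close>
lemma nn_integral_periodize:
  fixes f :: "real \<Rightarrow> ennreal"
  assumes f[measurable]: "f \<in> borel_measurable lebesgue" and b: "b > 0"
  shows "(\<integral>\<^sup>+x. f x \<partial>lebesgue) =
         (\<integral>\<^sup>+t. indicator {s..<s+1/b} t * (\<Sum>\<^sub>\<infinity>k::int. f (t - of_int k / b)) \<partial>lebesgue)"
proof -
  let ?W = "{s..<s+1/b}"
  have window_unique: "indicator ?W (x + of_int k / b) = (if k = \<lceil>(s - x) * b\<rceil> then 1 else (0::ennreal))"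
    for x and k :: int
  proof -
    have "x + of_int k / b \<in> ?W \<longleftrightarrow> s * b \<le> (x + of_int k / b) * b \<and> (x + of_int k / b) * b < (s + 1/b) * b"
      using b by simp
    moreover have "(x + of_int k / b) * b = x * b + of_int k" "(s + 1/b) * b = s * b + 1"
      using b by (simp_all add: field_simps)
    ultimately have "x + of_int k / b \<in> ?W \<longleftrightarrow> (s - x) * b \<le> of_int k \<and> of_int k < (s - x) * b + 1"
      by (auto simp: left_diff_distrib)
    then show ?thesis
      using ceiling_eq_iff[of "(s - x) * b" k] by (auto simp: indicator_def)
  qed
  have "(\<integral>\<^sup>+t. indicator ?W t * (\<Sum>\<^sub>\<infinity>k::int. f (t - of_int k / b)) \<partial>lebesgue)
      = (\<Sum>\<^sub>\<infinity>k::int. \<integral>\<^sup>+t. indicator ?W t * f (t - of_int k / b) \<partial>lebesgue)"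
    by (subst infsum_cmult_right_ennreal[symmetric], rule nn_integral_infsum_int) measurable
  also have "\<dots> = (\<Sum>\<^sub>\<infinity>k::int. \<integral>\<^sup>+x. indicator ?W (x + of_int k / b) * f x \<partial>lebesgue)"
  proof (rule infsum_cong)
    fix k :: int
    show "(\<integral>\<^sup>+t. indicator ?W t * f (t - of_int k / b) \<partial>lebesgue)
        = (\<integral>\<^sup>+x. indicator ?W (x + of_int k / b) * f x \<partial>lebesgue)"
      using nn_integral_real_affine_lebesgue[of "\<lambda>t. indicator ?W t * f (t - of_int k / b)" 1 "of_int k / b"]
      by (simp add: add.commute)
  qed
  also have "\<dots> = (\<integral>\<^sup>+x. (\<Sum>\<^sub>\<infinity>k::int. indicator ?W (x + of_int k / b) * f x) \<partial>lebesgue)"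
    by (rule nn_integral_infsum_int[symmetric]) measurable
  also have "\<dots> = (\<integral>\<^sup>+x. f x \<partial>lebesgue)"
  proof (rule nn_integral_cong)
    fix x
    have "(\<Sum>\<^sub>\<infinity>k::int. indicator ?W (x + of_int k / b) * f x) = (\<Sum>\<^sub>\<infinity>k\<in>{\<lceil>(s - x) * b\<rceil>}. f x)"
      by (rule infsum_cong_neutral) (auto simp: window_unique)
    then show "(\<Sum>\<^sub>\<infinity>k::int. indicator ?W (x + of_int k / b) * f x) = f x"
      by simp
  qed
  finally show ?thesis ..
qed

lemma nn_integral_indicator_eq_integral:
  fixes f :: "'a::euclidean_space \<Rightarrow> real"
  assumes "f integrable_on S" and "\<And>t. t \<in> S \<Longrightarrow> 0 \<le> f t"
  shows "(\<integral>\<^sup>+t. indicator S t * ennreal (f t) \<partial>lebesgue) = ennreal (integral S f)"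
proof -
  let ?g = "\<lambda>t. if t \<in> S then f t else 0"
  have "(?g has_integral integral S f) UNIV"
    using assms(1) by (simp add: has_integral_restrict_UNIV has_integral_integral)
  then have "integral\<^sup>N lebesgue ?g = integral S f"
    using assms(2) by (subst (asm) has_integral_iff_nn_integral_lebesgue) auto
  moreover have "indicator S t * ennreal (f t) = ennreal (?g t)" for t
    by (simp add: indicator_def)
  ultimately show ?thesis
    by simp
qed

section \<open>Square-integrable functions and the synthesis bound\<close>

lemma L2_transl: "f \<in> L2 \<Longrightarrow> transl c f \<in> L2"
  unfolding L2_def transl_def
  using lebesgue_integrable_real_affine[of "\<lambda>t. (cmod (f t))\<^sup>2" 1 "-c"] by auto measurable

lemma L2_modul: "f \<in> L2 \<Longrightarrow> modul c f \<in> L2"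
  unfolding L2_def modul_def by (auto simp: norm_mult) measurable

lemma L2_cmult: "f \<in> L2 \<Longrightarrow> (\<lambda>t. c * f t) \<in> L2"
  unfolding L2_def by (auto simp: norm_mult power_mult_distrib)

lemma L2_add:
  assumes "f \<in> L2" "h \<in> L2"
  shows "(\<lambda>t. f t + h t) \<in> L2"
proof -
  have [measurable]: "f \<in> borel_measurable lebesgue" "h \<in> borel_measurable lebesgue"
    using assms by (auto simp: L2_def)
  have bound: "(cmod (x + y))\<^sup>2 \<le> 2 * (cmod x)\<^sup>2 + 2 * (cmod y)\<^sup>2" for x y :: complex
  proof -
    have "(cmod (x + y))\<^sup>2 \<le> (cmod x + cmod y)\<^sup>2"
      by (simp add: norm_triangle_ineq power_mono)
    also have "\<dots> \<le> 2 * (cmod x)\<^sup>2 + 2 * (cmod y)\<^sup>2"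
      using sum_squares_ge_zero[of "cmod x - cmod y" 0] by (simp add: power2_eq_square algebra_simps)
    finally show ?thesis .
  qed
  have "integrable lebesgue (\<lambda>t. 2 * (cmod (f t))\<^sup>2 + 2 * (cmod (h t))\<^sup>2)"
    using assms by (simp add: L2_def)
  then have "integrable lebesgue (\<lambda>t. (cmod (f t + h t))\<^sup>2)"
    by (rule Bochner_Integration.integrable_bound) (simp_all add: bound)
  then show ?thesis
    by (simp add: L2_def)
qed

lemma L2_sum: "finite I \<Longrightarrow> (\<And>i. i \<in> I \<Longrightarrow> f i \<in> L2) \<Longrightarrow> (\<lambda>t. \<Sum>i\<in>I. f i t) \<in> L2"
proof (induction I rule: finite_induct)
  case empty
  then show ?case by (simp add: L2_def)
next
  case (insert i I)
  then show ?case
    using L2_add[of "f i" "\<lambda>t. \<Sum>i\<in>I. f i t"] by simp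
qed

lemma integrable_mult_cnj_L2:
  assumes "f \<in> L2" "h \<in> L2"
  shows "integrable lebesgue (\<lambda>t. f t * cnj (h t))"
proof -
  have [measurable]: "f \<in> borel_measurable lebesgue" "h \<in> borel_measurable lebesgue"
    using assms by (auto simp: L2_def)
  have bound: "cmod x * cmod y \<le> (cmod x)\<^sup>2 + (cmod y)\<^sup>2" for x y :: complex
  proof -
    have "2 * (cmod x * cmod y) \<le> (cmod x)\<^sup>2 + (cmod y)\<^sup>2"
      using sum_squares_ge_zero[of "cmod x - cmod y" 0] by (simp add: power2_eq_square algebra_simps)
    moreover have "0 \<le> cmod x * cmod y"
      by simp
    ultimately show ?thesis
      by linarith
  qed
  have "integrable lebesgue (\<lambda>t. (cmod (f t))\<^sup>2 + (cmod (h t))\<^sup>2)"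
    using assms by (simp add: L2_def)
  then show ?thesis
    by (rule Bochner_Integration.integrable_bound) (simp_all add: bound norm_mult)
qed

lemma L2_inner_self: "f \<in> L2 \<Longrightarrow> L2_inner f f = of_real (L2_norm_sq f)"
proof -
  have "L2_inner f f = (CLINT t|lebesgue. complex_of_real ((cmod (f t))\<^sup>2))"
    unfolding L2_inner_def by (simp only: complex_norm_square)
  also have "\<dots> = of_real (L2_norm_sq f)"
    unfolding L2_norm_sq_def by (rule integral_complex_of_real)
  finally show ?thesis .
qed

lemma L2_inner_sum_right:
  assumes "f \<in> L2" "finite I" "\<And>i. i \<in> I \<Longrightarrow> \<phi> i \<in> L2"
  shows "L2_inner f (\<lambda>t. \<Sum>i\<in>I. w i * \<phi> i t) = (\<Sum>i\<in>I. cnj (w i) * L2_inner f (\<phi> i))"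
proof -
  have "L2_inner f (\<lambda>t. \<Sum>i\<in>I. w i * \<phi> i t) = (CLINT t|lebesgue. \<Sum>i\<in>I. cnj (w i) * (f t * cnj (\<phi> i t)))"
    unfolding L2_inner_def by (simp add: sum_distrib_left mult_ac)
  also have "\<dots> = (\<Sum>i\<in>I. CLINT t|lebesgue. cnj (w i) * (f t * cnj (\<phi> i t)))"
    by (rule Bochner_Integration.integral_sum) (use assms integrable_mult_cnj_L2 in auto)
  also have "\<dots> = (\<Sum>i\<in>I. cnj (w i) * L2_inner f (\<phi> i))"
    unfolding L2_inner_def by simp
  finally show ?thesis .
qed

lemma nn_integral_L2: "f \<in> L2 \<Longrightarrow> (\<integral>\<^sup>+t. ennreal ((cmod (f t))\<^sup>2) \<partial>lebesgue) = ennreal (L2_norm_sq f)"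
  unfolding L2_norm_sq_def L2_def by (intro nn_integral_eq_integral) auto

text \<open>The upper frame bound of the analysis operator bounds the synthesis operator as well
  (its adjoint): test the frame inequality against the synthesized function itself.\<close>
lemma preframe_synthesis_bound:
  fixes w :: "int \<times> int \<Rightarrow> complex"
  assumes g: "g \<in> L2" and pf: "preframe g a b B" and W: "finite W"
  shows "L2_norm_sq (\<lambda>t. \<Sum>p\<in>W. w p * modul (of_int (fst p) * b) (transl (of_int (snd p) * a) g) t)
           \<le> max B 0 * (\<Sum>p\<in>W. (cmod (w p))\<^sup>2)"
proof -
  define \<phi> where "\<phi> p = modul (of_int (fst p) * b) (transl (of_int (snd p) * a) g)" for p :: "int \<times> int"
  define F where "F t = (\<Sum>p\<in>W. w p * \<phi> p t)" for t
  define X where "X = L2_norm_sq F"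
  define S where "S = (\<Sum>p\<in>W. (cmod (L2_inner F (\<phi> p)))\<^sup>2)"
  define C where "C = (\<Sum>p\<in>W. (cmod (w p))\<^sup>2)"
  have \<phi>: "\<phi> p \<in> L2" for p
    unfolding \<phi>_def by (intro L2_modul L2_transl g)
  have F: "F \<in> L2"
    unfolding F_def using W \<phi> by (intro L2_sum L2_cmult)
  have X0: "X \<ge> 0" and C0: "C \<ge> 0"
    unfolding X_def L2_norm_sq_def C_def by (auto intro: sum_nonneg)
  let ?coef = "\<lambda>(m::int, n::int). (cmod (L2_inner F (modul (of_int m * b) (transl (of_int n * a) g))))\<^sup>2"
  have "S = sum ?coef W"
    unfolding S_def \<phi>_def by (intro sum.cong) auto
  also have "\<dots> \<le> (\<Sum>\<^sub>\<infinity>p. ?coef p)"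
    using pf F W unfolding preframe_def by (intro finite_sum_le_infsum) auto
  also have "\<dots> \<le> B * X"
    using pf F unfolding preframe_def X_def by auto
  finally have S: "S \<le> B * X" .
  have "of_real X = L2_inner F (\<lambda>t. \<Sum>p\<in>W. w p * \<phi> p t)"
    unfolding X_def L2_inner_self[OF F, symmetric] by (simp add: F_def[abs_def])
  also have "\<dots> = (\<Sum>p\<in>W. cnj (w p) * L2_inner F (\<phi> p))"
    by (rule L2_inner_sum_right[OF F W \<phi>])
  finally have "X \<le> (\<Sum>p\<in>W. cmod (w p) * cmod (L2_inner F (\<phi> p)))"
    using X0 norm_sum[of "\<lambda>p. cnj (w p) * L2_inner F (\<phi> p)" W]
    by (metis (no_types, lifting) norm_mult complex_mod_cnj norm_of_real abs_of_nonneg sum.cong)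
  then have "X\<^sup>2 \<le> (\<Sum>p\<in>W. cmod (w p) * cmod (L2_inner F (\<phi> p)))\<^sup>2"
    using X0 by (simp add: power_mono)
  also have "\<dots> \<le> C * S"
    unfolding C_def S_def by (rule Cauchy_Schwarz_ineq_sum)
  also have "\<dots> \<le> C * (B * X)"
    using S C0 by (rule mult_left_mono)
  finally have "X * X \<le> (C * B) * X"
    by (simp add: power2_eq_square mult_ac)
  then have "X \<le> max B 0 * C"
    using X0 C0 by (cases "X = 0") (auto simp: mult.commute intro: order_trans[OF _ mult_left_mono[of B "max B 0" C]])
  then show ?thesis
    unfolding X_def C_def F_def[abs_def] \<phi>_def .
qed

section \<open>Trigonometric polynomials\<close>

definition trig_poly :: "real \<Rightarrow> (int \<Rightarrow> complex) \<Rightarrow> int set \<Rightarrow> real \<Rightarrow> complex" where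
  "trig_poly b q M t = (\<Sum>m\<in>M. q m * cis (2 * pi * (of_int m * b) * t))"

definition trig_polys :: "real \<Rightarrow> (real \<Rightarrow> complex) set" where
  "trig_polys b = {trig_poly b q M | q M. finite M}"

lemma trig_poly_periodic: "b \<noteq> 0 \<Longrightarrow> trig_poly b q M (t - of_int k / b) = trig_poly b q M t"
proof -
  assume "b \<noteq> 0"
  have "cis (2 * pi * (of_int m * b) * (t - of_int k / b)) = cis (2 * pi * (of_int m * b) * t)" for m :: int
  proof -
    have "2 * pi * (of_int m * b) * (t - of_int k / b) = 2 * pi * (of_int m * b) * t + 2 * pi * of_int (- m * k)"
      using \<open>b \<noteq> 0\<close> by (simp add: field_simps)
    moreover have "cis (2 * pi * of_int (- m * k)) = 1"
      by (rule cis_multiple_2pi) simp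
    ultimately show ?thesis
      by (simp only: cis_mult[symmetric] mult_1_right)
  qed
  then show ?thesis
    unfolding trig_poly_def by simp
qed

lemma exp_sum_in_trig_polys:
  assumes "finite P"
  shows "(\<lambda>t. \<Sum>p\<in>P. \<gamma> p * cis (2 * pi * (of_int (\<kappa> p) * b) * t)) \<in> trig_polys b"
proof -
  have "(\<Sum>p\<in>P. \<gamma> p * cis (2 * pi * (of_int (\<kappa> p) * b) * t))
      = trig_poly b (\<lambda>m. \<Sum>p\<in>{p\<in>P. \<kappa> p = m}. \<gamma> p) (\<kappa> ` P) t" for t
    unfolding trig_poly_def sum_distrib_right using assms
    by (subst sum.group[symmetric, of P "\<kappa> ` P" \<kappa>]) (auto intro!: sum.cong)
  then show ?thesis
    using assms unfolding trig_polys_def by blast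
qed

lemma trig_polysE:
  assumes "f \<in> trig_polys b"
  obtains q M where "finite M" "f = (\<lambda>t. \<Sum>m\<in>M. q m * cis (2 * pi * (of_int m * b) * t))"
  using assms unfolding trig_polys_def trig_poly_def by blast

lemma trig_polys_const: "(\<lambda>_. c) \<in> trig_polys b"
  using exp_sum_in_trig_polys[of "{0}" "\<lambda>_. c" "\<lambda>_. 0" b] by simp

lemma trig_polys_add:
  assumes "f \<in> trig_polys b" "h \<in> trig_polys b"
  shows "(\<lambda>t. f t + h t) \<in> trig_polys b"
proof -
  obtain q M q' M' where M: "finite M" "finite M'"
    and f: "f = (\<lambda>t. \<Sum>m\<in>M. q m * cis (2 * pi * (of_int m * b) * t))"
    and h: "h = (\<lambda>t. \<Sum>m\<in>M'. q' m * cis (2 * pi * (of_int m * b) * t))"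
    using assms by (elim trig_polysE)
  have "(\<lambda>t. f t + h t) = (\<lambda>t. \<Sum>p\<in>M <+> M'. case_sum q q' p * cis (2 * pi * (of_int (case_sum id id p) * b) * t))"
    using M by (simp add: f h sum.Plus)
  also have "\<dots> \<in> trig_polys b"
    by (rule exp_sum_in_trig_polys) (simp add: M)
  finally show ?thesis .
qed

lemma trig_polys_mult:
  assumes "f \<in> trig_polys b" "h \<in> trig_polys b"
  shows "(\<lambda>t. f t * h t) \<in> trig_polys b"
proof -
  obtain q M q' M' where M: "finite M" "finite M'"
    and f: "f = (\<lambda>t. \<Sum>m\<in>M. q m * cis (2 * pi * (of_int m * b) * t))"
    and h: "h = (\<lambda>t. \<Sum>m\<in>M'. q' m * cis (2 * pi * (of_int m * b) * t))"
    using assms by (elim trig_polysE)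
  have "f t * h t = (\<Sum>p\<in>M \<times> M'. (q (fst p) * q' (snd p)) * cis (2 * pi * (of_int (fst p + snd p) * b) * t))"
    for t
    unfolding f h sum_product sum.cartesian_product
    by (intro sum.cong refl) (auto simp: cis_mult distrib_left distrib_right mult_ac)
  then have "(\<lambda>t. f t * h t) = (\<lambda>t. \<Sum>p\<in>M \<times> M'. (q (fst p) * q' (snd p)) * cis (2 * pi * (of_int (fst p + snd p) * b) * t))"
    by (rule ext)
  also have "\<dots> \<in> trig_polys b"
    by (rule exp_sum_in_trig_polys) (simp add: M)
  finally show ?thesis .
qed

lemma trig_polys_sum: "finite I \<Longrightarrow> (\<And>i. i \<in> I \<Longrightarrow> f i \<in> trig_polys b) \<Longrightarrow> (\<lambda>t. \<Sum>i\<in>I. f i t) \<in> trig_polys b"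
  by (induction I rule: finite_induct) (auto intro: trig_polys_const trig_polys_add)

lemma trig_polys_power: "f \<in> trig_polys b \<Longrightarrow> (\<lambda>t. f t ^ n) \<in> trig_polys b"
  by (induction n) (auto intro: trig_polys_const trig_polys_mult)

lemma trig_polys_cos: "(\<lambda>t. of_real (cos (2 * pi * b * (t - tc)))) \<in> trig_polys b"
proof -
  have cos_cis: "of_real (cos \<theta>) = (cis \<theta> + cis (- \<theta>)) / 2" for \<theta>
    by (simp add: complex_eq_iff)
  have "of_real (cos (2 * pi * b * (t - tc)))
      = (\<Sum>m\<in>{-1, 1}. cis (- (2 * pi * (of_int m * b) * tc)) / 2 * cis (2 * pi * (of_int m * b) * t))" for t
    unfolding cos_cis by (simp add: cis_mult algebra_simps add_divide_distrib)
  then have "(\<lambda>t. of_real (cos (2 * pi * b * (t - tc))))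
      = (\<lambda>t. \<Sum>m\<in>{-1, 1}. cis (- (2 * pi * (of_int m * b) * tc)) / 2 * cis (2 * pi * (of_int m * b) * t))"
    by (rule ext)
  also have "\<dots> \<in> trig_polys b"
    by (rule exp_sum_in_trig_polys[where \<kappa> = "\<lambda>m. m"]) simp
  finally show ?thesis .
qed

lemma cos_poly_in_trig_polys:
  "(\<lambda>t. of_real (\<Sum>i\<le>d. a i * cos (2 * pi * b * (t - tc)) ^ i)) \<in> trig_polys b"
  by (simp only: of_real_sum of_real_mult of_real_power)
     (intro trig_polys_sum trig_polys_mult trig_polys_const trig_polys_power trig_polys_cos finite_atMost)

lemma trig_polys_approx_cos_comp:
  fixes f :: "real \<Rightarrow> real"
  assumes "continuous_on {-1..1} f" and "0 < \<epsilon>"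
  obtains P :: "real \<Rightarrow> real"
  where "(\<lambda>t. of_real (P t)) \<in> trig_polys b" and "\<And>t. \<bar>f (cos (2 * pi * b * (t - tc))) - P t\<bar> < \<epsilon>"
proof -
  obtain p where "real_polynomial_function p" and p: "\<And>y. y \<in> {-1..1} \<Longrightarrow> \<bar>f y - p y\<bar> < \<epsilon>"
    using Stone_Weierstrass_real_polynomial_function[of "{-1..1}" f \<epsilon>] assms by auto
  then obtain a d where p_eq: "p = (\<lambda>y. \<Sum>i\<le>d. a i * y ^ i)"
    by (auto simp: real_polynomial_function_iff_sum)
  show thesis
  proof
    show "(\<lambda>t. of_real (p (cos (2 * pi * b * (t - tc))))) \<in> trig_polys b"
      unfolding p_eq by (rule cos_poly_in_trig_polys)
    show "\<bar>f (cos (2 * pi * b * (t - tc))) - p (cos (2 * pi * b * (t - tc)))\<bar> < \<epsilon>" for t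
      by (rule p) simp
  qed
qed

lemma has_integral_cis_period:
  fixes k :: int
  assumes b: "b > 0"
  shows "((\<lambda>t. cis (2 * pi * (of_int k * b) * t)) has_integral (if k = 0 then of_real (1/b) else 0)) {s..s+1/b}"
proof (cases "k = 0")
  case True
  then show ?thesis
    using has_integral_const_real[of "1::complex" s "s + 1/b"] b by (simp add: scaleR_conv_of_real)
next
  case False
  define c where "c = 2 * pi * (of_int k * b)"
  have "c \<noteq> 0"
    using False b by (simp add: c_def)
  have exp_deriv: "((\<lambda>z. exp (\<i> * of_real c * z) / (\<i> * of_real c)) has_field_derivative exp (\<i> * of_real c * z)) (at z)"
    for z :: complex
    using \<open>c \<noteq> 0\<close> by (auto intro!: derivative_eq_intros)
  have "((\<lambda>t. cis (c * t) / (\<i> * c)) has_vector_derivative cis (c * t)) (at t within {s..s+1/b})" for t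
    using has_vector_derivative_real_field[OF exp_deriv] by (simp add: cis_conv_exp mult.assoc)
  then have "((\<lambda>t. cis (c * t)) has_integral (cis (c * (s + 1/b)) / (\<i> * c) - cis (c * s) / (\<i> * c))) {s..s+1/b}"
    using b by (intro fundamental_theorem_of_calculus) auto
  moreover have "cis (c * (s + 1/b)) = cis (c * s)"
  proof -
    have "c * (s + 1/b) = c * s + 2 * pi * of_int k"
      using b by (simp add: c_def field_simps)
    then show ?thesis
      by (simp add: cis_mult[symmetric])
  qed
  ultimately show ?thesis
    using False by (simp add: c_def)
qed

lemma trig_poly_has_integral_norm_sq:
  assumes b: "b > 0" and M: "finite M"
  shows "((\<lambda>t. (cmod (trig_poly b q M t))\<^sup>2) has_integral (1/b) * (\<Sum>m\<in>M. (cmod (q m))\<^sup>2)) {s..s+1/b}"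
proof -
  let ?e = "\<lambda>k::int. \<lambda>t. cis (2 * pi * (of_int k * b) * t)"
  have pointwise: "of_real ((cmod (trig_poly b q M t))\<^sup>2) = (\<Sum>m\<in>M. \<Sum>m'\<in>M. (q m * cnj (q m')) * ?e (m - m') t)"
    for t
  proof -
    have "of_real ((cmod (trig_poly b q M t))\<^sup>2) = trig_poly b q M t * cnj (trig_poly b q M t)"
      by (rule complex_norm_square)
    also have "\<dots> = (\<Sum>m\<in>M. \<Sum>m'\<in>M. (q m * cnj (q m')) * ?e (m - m') t)"
      unfolding trig_poly_def cnj_sum sum_product
      by (intro sum.cong refl) (simp add: cis_cnj cis_mult algebra_simps)
    finally show ?thesis .
  qed
  have "((\<lambda>t. \<Sum>m\<in>M. \<Sum>m'\<in>M. (q m * cnj (q m')) * ?e (m - m') t) has_integral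
          (\<Sum>m\<in>M. \<Sum>m'\<in>M. (q m * cnj (q m')) * (if m - m' = 0 then of_real (1/b) else 0))) {s..s+1/b}"
    using M b by (intro has_integral_sum has_integral_mult_right has_integral_cis_period)
  also have "(\<Sum>m\<in>M. \<Sum>m'\<in>M. (q m * cnj (q m')) * (if m - m' = 0 then of_real (1/b) else 0))
      = of_real (1/b) * (\<Sum>m\<in>M. q m * cnj (q m))"
    using M by (simp add: if_distrib sum_distrib_left mult_ac cong: if_cong)
  also have "\<dots> = of_real ((1/b) * (\<Sum>m\<in>M. (cmod (q m))\<^sup>2))"
    by (simp only: of_real_mult of_real_sum complex_norm_square)
  finally have "((\<lambda>t. of_real ((cmod (trig_poly b q M t))\<^sup>2)) has_integral
      (of_real ((1/b) * (\<Sum>m\<in>M. (cmod (q m))\<^sup>2)) :: complex)) {s..s+1/b}"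
    by (simp only: pointwise)
  from has_integral_linear[OF this bounded_linear_Re] show ?thesis
    by (simp add: o_def)
qed

lemma nn_integral_trig_poly_window:
  assumes b: "b > 0" and M: "finite M"
  shows "(\<integral>\<^sup>+t. indicator {s..<s+1/b} t * ennreal ((cmod (trig_poly b q M t))\<^sup>2) \<partial>lebesgue)
         = ennreal ((1/b) * (\<Sum>m\<in>M. (cmod (q m))\<^sup>2))"
proof -
  let ?f = "\<lambda>t. (cmod (trig_poly b q M t))\<^sup>2"
  let ?I = "(1/b) * (\<Sum>m\<in>M. (cmod (q m))\<^sup>2)"
  have "negligible {x \<in> {s..s+1/b} - {s..<s+1/b}. ?f x \<noteq> 0}"
    by (rule negligible_subset[of "{s + 1/b}"]) auto
  moreover have "negligible {x \<in> {s..<s+1/b} - {s..s+1/b}. ?f x \<noteq> 0}"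
    by (rule negligible_subset[of "{}"]) auto
  ultimately have "(?f has_integral ?I) {s..s+1/b} \<longleftrightarrow> (?f has_integral ?I) {s..<s+1/b}"
    by (rule has_integral_spike_set_eq)
  with trig_poly_has_integral_norm_sq[OF b M] have "(?f has_integral ?I) {s..<s+1/b}"
    by blast
  then show ?thesis
    by (subst nn_integral_indicator_eq_integral) (auto simp: integral_unique)
qed

text \<open>The bump is a Weierstrass approximation of a trapezoid on [-1, 1], composed with
  cos (2 pi b (t - tc)).\<close>
lemma trig_poly_bump:
  assumes b: "b > 0" and r: "0 < r" and \<delta>: "0 < \<delta>" "r + \<delta> < 1/(2*b)" and \<epsilon>: "0 < \<epsilon>"
  obtains P :: "real \<Rightarrow> real"
  where "(\<lambda>t. of_real (P t)) \<in> trig_polys b"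
    and "\<And>t. \<bar>P t\<bar> \<le> 1 + \<epsilon>"
    and "\<And>t. \<bar>t - tc\<bar> \<le> r \<Longrightarrow> 1 - \<epsilon> \<le> P t"
    and "\<And>t. r + \<delta> \<le> \<bar>t - tc\<bar> \<Longrightarrow> \<bar>t - tc\<bar> \<le> 1/(2*b) \<Longrightarrow> \<bar>P t\<bar> \<le> \<epsilon>"
proof -
  define \<beta> where "\<beta> = 2 * pi * b"
  define c1 where "c1 = cos (\<beta> * r)"
  define c2 where "c2 = cos (\<beta> * (r + \<delta>))"
  have \<beta>: "\<beta> > 0" "\<beta> * (1/(2*b)) = pi"
    using b by (simp_all add: \<beta>_def)
  have "\<beta> * (r + \<delta>) < pi"
    using \<beta> \<delta> by (metis mult_strict_left_mono)
  moreover have "0 < \<beta> * \<delta>"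
    using \<beta> \<delta> by simp
  ultimately have "\<beta> * r < \<beta> * (r + \<delta>)" "\<beta> * r \<le> pi"
    by (simp_all add: distrib_left)
  then have "c2 < c1"
    unfolding c1_def c2_def using \<beta> r \<open>\<beta> * (r + \<delta>) < pi\<close> by (subst cos_mono_less_eq) auto
  define f where "f y = max 0 (min 1 ((y - c2) / (c1 - c2)))" for y
  have "continuous_on {-1..1} f"
    unfolding f_def using \<open>c2 < c1\<close> by (intro continuous_intros) auto
  then obtain P where P: "(\<lambda>t. of_real (P t)) \<in> trig_polys b"
    and close': "\<And>t. \<bar>f (cos (2 * pi * b * (t - tc))) - P t\<bar> < \<epsilon>"
    using trig_polys_approx_cos_comp[where b = b and tc = tc, OF _ \<epsilon>] by blast
  have close: "\<bar>f (cos (\<beta> * (t - tc))) - P t\<bar> < \<epsilon>" for t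
    using close'[of t] by (simp add: \<beta>_def)
  show thesis
  proof
    show "(\<lambda>t. of_real (P t)) \<in> trig_polys b"
      by (rule P)
    show "\<bar>P t\<bar> \<le> 1 + \<epsilon>" for t
      using close[of t] by (auto simp: f_def)
    show "1 - \<epsilon> \<le> P t" if "\<bar>t - tc\<bar> \<le> r" for t
    proof -
      have "\<bar>\<beta> * (t - tc)\<bar> \<le> \<beta> * r"
        using that \<beta> by (simp add: abs_mult)
      with \<open>\<beta> * r \<le> pi\<close> have "c1 \<le> cos (\<beta> * (t - tc))"
        unfolding c1_def using \<beta> r cos_mono_le_eq[of "\<beta> * r" "\<bar>\<beta> * (t - tc)\<bar>"] by simp
      then have "f (cos (\<beta> * (t - tc))) = 1"
        using \<open>c2 < c1\<close> by (simp add: f_def)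
      then show ?thesis
        using close[of t] by simp
    qed
    show "\<bar>P t\<bar> \<le> \<epsilon>" if "r + \<delta> \<le> \<bar>t - tc\<bar>" "\<bar>t - tc\<bar> \<le> 1/(2*b)" for t
    proof -
      have "\<beta> * (r + \<delta>) \<le> \<bar>\<beta> * (t - tc)\<bar>" "\<bar>\<beta> * (t - tc)\<bar> \<le> pi"
        using that \<beta> by (auto simp: abs_mult intro: order_trans[OF mult_left_mono[of _ "1/(2*b)"]])
      then have "cos (\<beta> * (t - tc)) \<le> c2"
        unfolding c2_def using \<beta> r \<delta> cos_mono_le_eq[of "\<bar>\<beta> * (t - tc)\<bar>" "\<beta> * (r + \<delta>)"] by simp
      then have "f (cos (\<beta> * (t - tc))) = 0"
        using \<open>c2 < c1\<close> by (simp add: f_def divide_le_0_iff)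
      then show ?thesis
        using close[of t] by simp
    qed
  qed
qed

lemma nn_integral_bump_sq_le:
  fixes P :: "real \<Rightarrow> real"
  assumes b: "b > 0" and r: "0 \<le> r" and \<delta>: "0 < \<delta>" and \<epsilon>: "0 \<le> \<epsilon>"
    and P_le: "\<And>t. \<bar>P t\<bar> \<le> 1 + \<epsilon>"
    and P_outside: "\<And>t. r + \<delta> \<le> \<bar>t - tc\<bar> \<Longrightarrow> \<bar>t - tc\<bar> \<le> 1/(2*b) \<Longrightarrow> \<bar>P t\<bar> \<le> \<epsilon>"
  shows "(\<integral>\<^sup>+t. indicator {tc - 1/(2*b)..<tc - 1/(2*b) + 1/b} t * ennreal ((P t)\<^sup>2) \<partial>lebesgue)
           \<le> ennreal ((1+\<epsilon>)\<^sup>2 * (2*r + 2*\<delta>) + \<epsilon>\<^sup>2 / b)"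
proof -
  define W where "W = {tc - 1/(2*b)..<tc - 1/(2*b) + 1/b}"
  define I where "I = {tc - r - \<delta>..tc + r + \<delta>}"
  have "indicator W t * ennreal ((P t)\<^sup>2) \<le> ennreal ((1+\<epsilon>)\<^sup>2) * indicator I t + ennreal (\<epsilon>\<^sup>2) * indicator W t"
    for t
  proof -
    have "(P t)\<^sup>2 \<le> (1+\<epsilon>)\<^sup>2"
      using power_mono[OF P_le[of t], of 2] by simp
    moreover have "(P t)\<^sup>2 \<le> \<epsilon>\<^sup>2" if "t \<in> W" "t \<notin> I"
    proof -
      have "tc - 1/(2*b) + 1/b = tc + 1/(2*b)"
        using b by (simp add: field_simps)
      then have "\<bar>t - tc\<bar> \<le> 1/(2*b)"
        using that(1) unfolding W_def atLeastLessThan_iff by linarith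
      moreover have "r + \<delta> \<le> \<bar>t - tc\<bar>"
        using that(2) unfolding I_def atLeastAtMost_iff by linarith
      ultimately show ?thesis
        using power_mono[OF P_outside, of t 2] by simp
    qed
    ultimately show ?thesis
      by (auto simp: indicator_def intro: ennreal_leI add_increasing2)
  qed
  then have "(\<integral>\<^sup>+t. indicator W t * ennreal ((P t)\<^sup>2) \<partial>lebesgue)
      \<le> (\<integral>\<^sup>+t. ennreal ((1+\<epsilon>)\<^sup>2) * indicator I t + ennreal (\<epsilon>\<^sup>2) * indicator W t \<partial>lebesgue)"
    by (rule nn_integral_mono)
  also have "\<dots> = ennreal ((1+\<epsilon>)\<^sup>2) * ennreal (2*r + 2*\<delta>) + ennreal (\<epsilon>\<^sup>2) * ennreal (1/b)"
  proof -
    have "I \<in> sets lebesgue" "W \<in> sets lebesgue"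
      by (simp_all add: I_def W_def)
    moreover have "emeasure lebesgue I = ennreal (2*r + 2*\<delta>)" "emeasure lebesgue W = ennreal (1/b)"
      using r \<delta> b by (simp_all add: I_def W_def algebra_simps)
    ultimately show ?thesis
      by (simp add: nn_integral_add nn_integral_cmult_indicator)
  qed
  also have "\<dots> = ennreal ((1+\<epsilon>)\<^sup>2 * (2*r + 2*\<delta>) + \<epsilon>\<^sup>2 / b)"
  proof -
    have "ennreal ((1+\<epsilon>)\<^sup>2) * ennreal (2*r + 2*\<delta>) = ennreal ((1+\<epsilon>)\<^sup>2 * (2*r + 2*\<delta>))"
      by (rule ennreal_mult[symmetric]) (use r \<delta> in auto)
    moreover have "ennreal (\<epsilon>\<^sup>2) * ennreal (1/b) = ennreal (\<epsilon>\<^sup>2 / b)"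
      by (subst ennreal_mult[symmetric]) (use b in auto)
    ultimately show ?thesis
      using r \<delta> b by (simp add: ennreal_plus)
  qed
  finally show ?thesis
    unfolding W_def .
qed

section \<open>Brackets of combinations of translates\<close>

lemma norm_b_measurable[measurable]:
  assumes [measurable]: "f \<in> borel_measurable lebesgue"
  shows "norm_b b f \<in> borel_measurable lebesgue"
  unfolding norm_b_def[abs_def] by measurable

lemma nn_integral_norm_b_window:
  assumes "f \<in> L2" and b: "b > 0"
  shows "(\<integral>\<^sup>+t. indicator {s..<s+1/b} t * norm_b b f t \<partial>lebesgue) = ennreal (L2_norm_sq f)"
proof -
  have [measurable]: "f \<in> borel_measurable lebesgue"
    using assms by (simp add: L2_def)
  show ?thesis
    unfolding norm_b_def nn_integral_L2[OF assms(1), symmetric]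
    by (rule nn_integral_periodize[symmetric]) (use b in auto)
qed

lemma AE_norm_b_finite:
  assumes f: "f \<in> L2" and b: "b > 0"
  shows "AE t in lebesgue. norm_b b f t \<noteq> \<infinity>"
proof -
  let ?W = "\<lambda>j::int. {of_int j / b..<of_int j / b + 1/b}"
  have [measurable]: "f \<in> borel_measurable lebesgue"
    using f by (simp add: L2_def)
  have "AE t in lebesgue. t \<in> ?W j \<longrightarrow> norm_b b f t \<noteq> \<infinity>" for j
  proof -
    have "AE t in lebesgue. indicator (?W j) t * norm_b b f t \<noteq> \<infinity>"
      by (rule nn_integral_PInf_AE) (simp_all add: nn_integral_norm_b_window[OF f b])
    then show ?thesis
      by eventually_elim (auto split: split_indicator)
  qed
  then have "AE t in lebesgue. \<forall>j. t \<in> ?W j \<longrightarrow> norm_b b f t \<noteq> \<infinity>"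
    by (subst AE_all_countable) blast
  moreover have "\<exists>j. t \<in> ?W j" for t
  proof
    have "of_int \<lfloor>t * b\<rfloor> \<le> t * b" "t * b < of_int \<lfloor>t * b\<rfloor> + 1"
      by linarith+
    then show "t \<in> ?W \<lfloor>t * b\<rfloor>"
      using b by (auto simp: field_simps)
  qed
  ultimately show ?thesis
    by (auto elim!: AE_mp)
qed

lemma norm_b_mult_periodic:
  assumes "\<And>k::int. h (t - of_int k / b) = h t"
  shows "norm_b b (\<lambda>s. h s * f s) t = ennreal ((cmod (h t))\<^sup>2) * norm_b b f t"
  unfolding norm_b_def infsum_cmult_right_ennreal[symmetric]
  by (simp add: assms norm_mult power_mult_distrib ennreal_mult)

definition transl_comb :: "(real \<Rightarrow> complex) \<Rightarrow> real \<Rightarrow> int set \<Rightarrow> (int \<Rightarrow> complex) \<Rightarrow> real \<Rightarrow> complex" where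
  "transl_comb g a N c t = (\<Sum>n\<in>N. c n * transl (of_int n * a) g t)"

lemma transl_comb_L2: "g \<in> L2 \<Longrightarrow> finite N \<Longrightarrow> transl_comb g a N c \<in> L2"
  unfolding transl_comb_def[abs_def] by (intro L2_sum L2_cmult L2_transl)

lemma trig_poly_weighted_norm_b_bound:
  assumes g: "g \<in> L2" and pf: "preframe g a b B" and b: "b > 0"
    and P: "P \<in> trig_polys b" and N: "finite N"
  shows "(\<integral>\<^sup>+t. indicator {s..<s+1/b} t *
            (ennreal ((cmod (P t))\<^sup>2) * norm_b b (transl_comb g a N c) t) \<partial>lebesgue)
         \<le> ennreal (b * max B 0 * (\<Sum>n\<in>N. (cmod (c n))\<^sup>2)) *
           (\<integral>\<^sup>+t. indicator {s..<s+1/b} t * ennreal ((cmod (P t))\<^sup>2) \<partial>lebesgue)"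
proof -
  obtain q M where M: "finite M" and P_eq: "P = trig_poly b q M"
    using P by (auto simp: trig_polys_def)
  define w where "w p = q (fst p) * c (snd p)" for p :: "int \<times> int"
  define F where "F t = (\<Sum>p\<in>M \<times> N. w p * modul (of_int (fst p) * b) (transl (of_int (snd p) * a) g) t)" for t
  have F_eq: "F t = P t * transl_comb g a N c t" for t
    unfolding F_def P_eq trig_poly_def transl_comb_def sum_product sum.cartesian_product
    by (intro sum.cong refl) (auto simp: w_def modul_def mult_ac)
  have F: "F \<in> L2"
    unfolding F_def[abs_def] using M N g by (intro L2_sum L2_cmult L2_modul L2_transl) auto
  have "(\<integral>\<^sup>+t. indicator {s..<s+1/b} t *
            (ennreal ((cmod (P t))\<^sup>2) * norm_b b (transl_comb g a N c) t) \<partial>lebesgue)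
      = (\<integral>\<^sup>+t. indicator {s..<s+1/b} t * norm_b b F t \<partial>lebesgue)"
    using b by (simp add: F_eq[abs_def] P_eq norm_b_mult_periodic trig_poly_periodic)
  also have "\<dots> = ennreal (L2_norm_sq F)"
    by (rule nn_integral_norm_b_window[OF F b])
  also have "\<dots> \<le> ennreal (max B 0 * (\<Sum>p\<in>M \<times> N. (cmod (w p))\<^sup>2))"
    unfolding F_def[abs_def] using M N by (intro ennreal_leI preframe_synthesis_bound[OF g pf]) simp
  also have "\<dots> = ennreal (b * max B 0 * (\<Sum>n\<in>N. (cmod (c n))\<^sup>2)) * ennreal ((1/b) * (\<Sum>m\<in>M. (cmod (q m))\<^sup>2))"
  proof -
    have "(\<Sum>p\<in>M \<times> N. (cmod (w p))\<^sup>2) = (\<Sum>m\<in>M. (cmod (q m))\<^sup>2) * (\<Sum>n\<in>N. (cmod (c n))\<^sup>2)"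
      by (simp add: w_def norm_mult power_mult_distrib sum_product sum.cartesian_product split_def)
    then show ?thesis
      using b by (simp add: ennreal_mult[symmetric] sum_nonneg)
  qed
  also have "\<dots> = ennreal (b * max B 0 * (\<Sum>n\<in>N. (cmod (c n))\<^sup>2)) *
           (\<integral>\<^sup>+t. indicator {s..<s+1/b} t * ennreal ((cmod (P t))\<^sup>2) \<partial>lebesgue)"
    by (simp add: P_eq nn_integral_trig_poly_window[OF b M])
  finally show ?thesis .
qed

section \<open>From weighted integral bounds to pointwise bounds\<close>

lemma interval_integral_step:
  fixes V :: "real \<Rightarrow> ennreal"
  assumes V: "V \<in> borel_measurable lebesgue" and b: "b > 0"
    and weighted: "\<And>s P. P \<in> trig_polys b \<Longrightarrow>
      (\<integral>\<^sup>+t. indicator {s..<s+1/b} t * (ennreal ((cmod (P t))\<^sup>2) * V t) \<partial>lebesgue)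
        \<le> ennreal C * (\<integral>\<^sup>+t. indicator {s..<s+1/b} t * ennreal ((cmod (P t))\<^sup>2) \<partial>lebesgue)"
    and h: "0 < h" and \<epsilon>: "0 < \<epsilon>" "\<epsilon> < 1" and \<delta>: "0 < \<delta>" "h/2 + \<delta> < 1/(2*b)"
  shows "ennreal ((1-\<epsilon>)\<^sup>2) * (\<integral>\<^sup>+t. indicator {x..x+h} t * V t \<partial>lebesgue)
           \<le> ennreal C * ennreal ((1+\<epsilon>)\<^sup>2 * (h + 2*\<delta>) + \<epsilon>\<^sup>2 / b)"
proof -
  define tc where "tc = x + h/2"
  define W where "W = {tc - 1/(2*b)..<tc - 1/(2*b) + 1/b}"
  obtain P where P: "(\<lambda>t. of_real (P t)) \<in> trig_polys b"
    and P_le: "\<And>t. \<bar>P t\<bar> \<le> 1 + \<epsilon>"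
    and P_inside: "\<And>t. \<bar>t - tc\<bar> \<le> h/2 \<Longrightarrow> 1 - \<epsilon> \<le> P t"
    and P_outside: "\<And>t. h/2 + \<delta> \<le> \<bar>t - tc\<bar> \<Longrightarrow> \<bar>t - tc\<bar> \<le> 1/(2*b) \<Longrightarrow> \<bar>P t\<bar> \<le> \<epsilon>"
    using trig_poly_bump[OF b _ \<delta> \<epsilon>(1), where tc = tc] h by auto
  have "ennreal ((1-\<epsilon>)\<^sup>2) * (\<integral>\<^sup>+t. indicator {x..x+h} t * V t \<partial>lebesgue)
      = (\<integral>\<^sup>+t. indicator {x..x+h} t * (ennreal ((1-\<epsilon>)\<^sup>2) * V t) \<partial>lebesgue)"
    using V by (subst nn_integral_cmult[symmetric]) (auto simp: mult_ac)
  also have "\<dots> \<le> (\<integral>\<^sup>+t. indicator W t * (ennreal ((P t)\<^sup>2) * V t) \<partial>lebesgue)"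
  proof (intro nn_integral_mono)
    fix t
    show "indicator {x..x+h} t * (ennreal ((1-\<epsilon>)\<^sup>2) * V t) \<le> indicator W t * (ennreal ((P t)\<^sup>2) * V t)"
    proof (cases "t \<in> {x..x+h}")
      case True
      then have "\<bar>t - tc\<bar> \<le> h/2"
        unfolding tc_def abs_le_iff by auto
      moreover have "h/2 < 1/(2*b)"
        using \<delta> by simp
      moreover have "tc - 1/(2*b) + 1/b = tc + 1/(2*b)"
        using b by (simp add: field_simps)
      ultimately have "t \<in> W"
        unfolding W_def atLeastLessThan_iff abs_le_iff by linarith
      moreover have "(1-\<epsilon>)\<^sup>2 \<le> (P t)\<^sup>2"
        using P_inside[OF \<open>\<bar>t - tc\<bar> \<le> h/2\<close>] \<epsilon> by (intro power_mono) auto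
      ultimately show ?thesis
        using True by (auto intro: mult_right_mono ennreal_leI)
    qed simp
  qed
  also have "\<dots> \<le> ennreal C * (\<integral>\<^sup>+t. indicator W t * ennreal ((P t)\<^sup>2) \<partial>lebesgue)"
    using weighted[OF P, of "tc - 1/(2*b)"] by (simp add: W_def)
  also have "\<dots> \<le> ennreal C * ennreal ((1+\<epsilon>)\<^sup>2 * (h + 2*\<delta>) + \<epsilon>\<^sup>2 / b)"
    using nn_integral_bump_sq_le[OF b _ \<delta>(1) _ P_le, of "h/2"] P_outside h \<epsilon>
    by (intro mult_left_mono) (auto simp: W_def)
  finally show ?thesis .
qed

lemma interval_integral_le_of_weighted:
  fixes V :: "real \<Rightarrow> ennreal"
  assumes V: "V \<in> borel_measurable lebesgue" and b: "b > 0" and C: "0 \<le> C"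
    and weighted: "\<And>s P. P \<in> trig_polys b \<Longrightarrow>
      (\<integral>\<^sup>+t. indicator {s..<s+1/b} t * (ennreal ((cmod (P t))\<^sup>2) * V t) \<partial>lebesgue)
        \<le> ennreal C * (\<integral>\<^sup>+t. indicator {s..<s+1/b} t * ennreal ((cmod (P t))\<^sup>2) \<partial>lebesgue)"
    and h: "0 < h" "h < 1/b"
  shows "(\<integral>\<^sup>+t. indicator {x..x+h} t * V t \<partial>lebesgue) \<le> ennreal (C * h)"
proof -
  define A where "A = (\<integral>\<^sup>+t. indicator {x..x+h} t * V t \<partial>lebesgue)"
  define \<delta>\<^sub>0 where "\<delta>\<^sub>0 = 1/(2*b) - h/2"
  define R where "R \<epsilon> = (1+\<epsilon>)\<^sup>2 * (h + 2 * (\<epsilon> * \<delta>\<^sub>0)) + \<epsilon>\<^sup>2 / b" for \<epsilon>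
  have \<delta>\<^sub>0: "0 < \<delta>\<^sub>0"
    using h b by (simp add: \<delta>\<^sub>0_def field_simps)
  have step: "ennreal ((1-\<epsilon>)\<^sup>2) * A \<le> ennreal C * ennreal (R \<epsilon>)" if "0 < \<epsilon>" "\<epsilon> < 1" for \<epsilon>
  proof -
    have "\<epsilon> * \<delta>\<^sub>0 < \<delta>\<^sub>0"
      using that \<delta>\<^sub>0 by simp
    then have "h/2 + \<epsilon> * \<delta>\<^sub>0 < 1/(2*b)"
      unfolding \<delta>\<^sub>0_def by linarith
    then show ?thesis
      unfolding A_def R_def using that \<delta>\<^sub>0
      by (intro interval_integral_step[OF V b weighted h(1)]) auto
  qed
  have "A \<noteq> \<infinity>"
    using step[of "1/2"] by (auto simp: ennreal_mult_eq_top_iff top_unique)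
  then obtain a where A: "A = ennreal a" and a: "0 \<le> a"
    by (cases A) auto
  have R: "0 \<le> R \<epsilon>" if "0 \<le> \<epsilon>" for \<epsilon>
    using that \<delta>\<^sub>0 h b by (simp add: R_def)
  have "(1-\<epsilon>)\<^sup>2 * a \<le> C * R \<epsilon>" if "0 < \<epsilon>" "\<epsilon> < 1" for \<epsilon>
    using step[OF that] a C R[of \<epsilon>] that unfolding A
    by (simp add: ennreal_mult[symmetric] mult_nonneg_nonneg)
  then have "\<forall>\<^sub>F \<epsilon> in at_right 0. (1-\<epsilon>)\<^sup>2 * a \<le> C * R \<epsilon>"
    unfolding eventually_at_right[OF zero_less_one] by (intro exI[of _ 1]) auto
  moreover have "((\<lambda>\<epsilon>. (1-\<epsilon>)\<^sup>2 * a) \<longlongrightarrow> (1-0)\<^sup>2 * a) (at_right 0)"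
    by (intro tendsto_intros)
  moreover have "((\<lambda>\<epsilon>. C * R \<epsilon>) \<longlongrightarrow> C * ((1+0)\<^sup>2 * (h + 2 * (0 * \<delta>\<^sub>0)) + 0\<^sup>2 / b)) (at_right 0)"
    unfolding R_def using b by (intro tendsto_intros) auto
  ultimately have "a \<le> C * h"
    using tendsto_le[OF trivial_limit_at_right_real] by fastforce
  then show ?thesis
    unfolding A_def[symmetric] A by (rule ennreal_leI)
qed

lemma AE_le_of_interval_integrals_real:
  fixes f :: "real \<Rightarrow> real"
  assumes f: "\<And>u v. f integrable_on {u..v}" and L: "0 < L"
    and average: "\<And>x h. 0 < h \<Longrightarrow> h < L \<Longrightarrow> integral {x..x+h} f \<le> C * h"
  shows "AE x in lebesgue. f x \<le> C"
proof -
  obtain N where "negligible N"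
    and diff: "\<And>x e. x \<notin> N \<Longrightarrow> 0 < e \<Longrightarrow>
      \<exists>d>0. \<forall>h. 0 < h \<and> h < d \<longrightarrow> norm (integral (cbox x (x + h *\<^sub>R One)) f /\<^sub>R h ^ DIM(real) - f x) < e"
    using integrable_ccontinuous_explicit[of f] f by (metis cbox_interval)
  have "f x \<le> C" if x: "x \<notin> N" for x
  proof (rule field_le_epsilon)
    fix e :: real
    assume "0 < e"
    then obtain d where "d > 0" and d: "\<And>h. 0 < h \<Longrightarrow> h < d \<Longrightarrow> \<bar>integral {x..x+h} f / h - f x\<bar> < e"
      using diff[OF x \<open>0 < e\<close>] by (auto simp: divide_inverse mult.commute)
    define h where "h = min d L / 2"
    have h: "0 < h" "h < d" "h < L"
      using \<open>d > 0\<close> L by (auto simp: h_def)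
    have "integral {x..x+h} f / h \<le> C"
      using average[OF h(1,3)] h(1) by (simp add: divide_le_eq)
    then show "f x \<le> C + e"
      using d[OF h(1,2)] by linarith
  qed
  moreover have "AE x in lebesgue. x \<notin> N"
    using \<open>negligible N\<close> by (intro AE_not_in) (simp add: negligible_iff_null_sets)
  ultimately show ?thesis
    by (auto elim!: AE_mp)
qed

text \<open>Truncating V at C + 1 makes it locally integrable, so Lebesgue differentiation applies.\<close>
lemma AE_le_of_interval_integrals:
  fixes V :: "real \<Rightarrow> ennreal"
  assumes V[measurable]: "V \<in> borel_measurable lebesgue" and L: "0 < L" and C: "0 \<le> C"
    and bound: "\<And>x h. 0 < h \<Longrightarrow> h < L \<Longrightarrow> (\<integral>\<^sup>+t. indicator {x..x+h} t * V t \<partial>lebesgue) \<le> ennreal (C * h)"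
  shows "AE t in lebesgue. V t \<le> ennreal C"
proof -
  define f where "f t = enn2real (min (V t) (ennreal (C + 1)))" for t
  have f_eq: "ennreal (f t) = min (V t) (ennreal (C + 1))" for t
    using C unfolding f_def by (cases "V t") (auto simp: min_def top_unique)
  have [measurable]: "f \<in> borel_measurable lebesgue"
    unfolding f_def by measurable
  have f_nonneg: "0 \<le> f t" and f_le: "f t \<le> C + 1" for t
    using f_eq[of t] C by (simp_all add: f_def ennreal_le_iff[symmetric])
  have f_integrable: "f integrable_on {u..v}" for u v
    by (rule measurable_bounded_by_integrable_imp_integrable[where g = "\<lambda>_. C + 1"])
       (auto intro: measurable_restrict_space1 simp: f_nonneg f_le)
  have "AE t in lebesgue. f t \<le> C"
  proof (rule AE_le_of_interval_integrals_real[OF f_integrable L])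
    fix x h :: real
    assume h: "0 < h" "h < L"
    have "ennreal (integral {x..x+h} f) = (\<integral>\<^sup>+t. indicator {x..x+h} t * ennreal (f t) \<partial>lebesgue)"
      by (rule nn_integral_indicator_eq_integral[symmetric]) (auto intro: f_integrable f_nonneg)
    also have "\<dots> \<le> (\<integral>\<^sup>+t. indicator {x..x+h} t * V t \<partial>lebesgue)"
      by (intro nn_integral_mono mult_left_mono) (auto simp: f_eq)
    also have "\<dots> \<le> ennreal (C * h)"
      by (rule bound[OF h])
    finally show "integral {x..x+h} f \<le> C * h"
      using C h by (simp add: ennreal_le_iff)
  qed
  then show ?thesis
  proof eventually_elim
    case (elim t)
    then have "min (V t) (ennreal (C + 1)) \<le> ennreal C"
      by (simp add: f_eq[symmetric] ennreal_leI)
    then show ?case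
      using C by (auto simp: min_le_iff_disj ennreal_le_iff)
  qed
qed

lemma AE_norm_b_transl_comb_le:
  assumes g: "g \<in> L2" and pf: "preframe g a b B" and b: "b > 0" and N: "finite N"
  shows "AE t in lebesgue. norm_b b (transl_comb g a N c) t \<le> ennreal (b * max B 0 * (\<Sum>n\<in>N. (cmod (c n))\<^sup>2))"
proof -
  have "transl_comb g a N c \<in> borel_measurable lebesgue"
    using transl_comb_L2[OF g N] by (simp add: L2_def)
  then have V: "norm_b b (transl_comb g a N c) \<in> borel_measurable lebesgue"
    by (rule norm_b_measurable)
  have C: "0 \<le> b * max B 0 * (\<Sum>n\<in>N. (cmod (c n))\<^sup>2)"
    using b by (simp add: sum_nonneg)
  show ?thesis
    using V b C trig_poly_weighted_norm_b_bound[OF g pf b _ N]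
    by (intro AE_le_of_interval_integrals interval_integral_le_of_weighted) auto
qed

section \<open>Pointwise duality\<close>

lemma sum_le_enn2real_infsum:
  fixes z :: "'a \<Rightarrow> complex"
  assumes "finite F" and "(\<Sum>\<^sub>\<infinity>k. ennreal ((cmod (z k))\<^sup>2)) \<noteq> \<infinity>"
  shows "(\<Sum>k\<in>F. (cmod (z k))\<^sup>2) \<le> enn2real (\<Sum>\<^sub>\<infinity>k. ennreal ((cmod (z k))\<^sup>2))"
proof -
  have "ennreal (\<Sum>k\<in>F. (cmod (z k))\<^sup>2) \<le> (\<Sum>\<^sub>\<infinity>k. ennreal ((cmod (z k))\<^sup>2))"
    using sum_le_infsum_ennreal[OF assms(1), of "\<lambda>k. ennreal ((cmod (z k))\<^sup>2)"] by simp
  then show ?thesis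
    using assms(2) by (cases "\<Sum>\<^sub>\<infinity>k. ennreal ((cmod (z k))\<^sup>2)") auto
qed

lemma Cauchy_Schwarz_infsum_ennreal:
  fixes x y :: "'a \<Rightarrow> complex"
  assumes X: "(\<Sum>\<^sub>\<infinity>k. ennreal ((cmod (x k))\<^sup>2)) \<noteq> \<infinity>" and Y: "(\<Sum>\<^sub>\<infinity>k. ennreal ((cmod (y k))\<^sup>2)) \<noteq> \<infinity>"
  shows "(\<lambda>k. norm (x k * y k)) summable_on UNIV"
    and "ennreal ((cmod (\<Sum>\<^sub>\<infinity>k. x k * y k))\<^sup>2)
           \<le> (\<Sum>\<^sub>\<infinity>k. ennreal ((cmod (x k))\<^sup>2)) * (\<Sum>\<^sub>\<infinity>k. ennreal ((cmod (y k))\<^sup>2))"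
proof -
  define X' where "X' = enn2real (\<Sum>\<^sub>\<infinity>k. ennreal ((cmod (x k))\<^sup>2))"
  define Y' where "Y' = enn2real (\<Sum>\<^sub>\<infinity>k. ennreal ((cmod (y k))\<^sup>2))"
  have X': "0 \<le> X'" and Y': "0 \<le> Y'"
    by (simp_all add: X'_def Y'_def)
  have finite_sums: "(\<Sum>k\<in>F. norm (x k * y k)) \<le> sqrt X' * sqrt Y'" if "finite F" for F
  proof -
    have "(\<Sum>k\<in>F. norm (x k * y k))\<^sup>2 \<le> (\<Sum>k\<in>F. (cmod (x k))\<^sup>2) * (\<Sum>k\<in>F. (cmod (y k))\<^sup>2)"
      unfolding norm_mult by (rule Cauchy_Schwarz_ineq_sum)
    also have "\<dots> \<le> X' * Y'"
      unfolding X'_def Y'_def using sum_le_enn2real_infsum[OF that] X Y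
      by (intro mult_mono) (auto intro: sum_nonneg)
    finally have "sqrt ((\<Sum>k\<in>F. norm (x k * y k))\<^sup>2) \<le> sqrt (X' * Y')"
      by (rule real_sqrt_le_mono)
    then show ?thesis
      by (simp add: real_sqrt_mult sum_nonneg)
  qed
  show summable: "(\<lambda>k. norm (x k * y k)) summable_on UNIV"
    by (rule nonneg_bdd_above_summable_on) (auto intro!: bdd_aboveI finite_sums)
  have "cmod (\<Sum>\<^sub>\<infinity>k. x k * y k) \<le> (\<Sum>\<^sub>\<infinity>k. norm (x k * y k))"
    using summable by (rule norm_infsum_bound)
  also have "\<dots> \<le> sqrt X' * sqrt Y'"
    using summable finite_sums by (rule infsum_le_finite_sums) auto
  finally have "(cmod (\<Sum>\<^sub>\<infinity>k. x k * y k))\<^sup>2 \<le> (sqrt X' * sqrt Y')\<^sup>2"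
    by (intro power_mono) auto
  also have "\<dots> = X' * Y'"
    using X' Y' by (simp add: power_mult_distrib)
  finally have "ennreal ((cmod (\<Sum>\<^sub>\<infinity>k. x k * y k))\<^sup>2) \<le> ennreal X' * ennreal Y'"
    using X' Y' by (simp add: ennreal_mult[symmetric] ennreal_leI)
  also have "ennreal X' * ennreal Y' = (\<Sum>\<^sub>\<infinity>k. ennreal ((cmod (x k))\<^sup>2)) * (\<Sum>\<^sub>\<infinity>k. ennreal ((cmod (y k))\<^sup>2))"
    using X Y by (simp add: X'_def Y'_def ennreal_enn2real_if)
  finally show "ennreal ((cmod (\<Sum>\<^sub>\<infinity>k. x k * y k))\<^sup>2)
      \<le> (\<Sum>\<^sub>\<infinity>k. ennreal ((cmod (x k))\<^sup>2)) * (\<Sum>\<^sub>\<infinity>k. ennreal ((cmod (y k))\<^sup>2))" .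
qed

lemma norm_sum_inner_b_le:
  assumes N: "finite N" and G: "norm_b b g t \<noteq> \<infinity>"
    and G_transl: "\<And>n. n \<in> N \<Longrightarrow> norm_b b (transl (of_int n * a) g) t \<noteq> \<infinity>"
    and V: "norm_b b (transl_comb g a N c) t \<noteq> \<infinity>"
  shows "ennreal ((cmod (\<Sum>n\<in>N. c n * cnj (inner_b b g (transl (of_int n * a) g) t)))\<^sup>2)
           \<le> norm_b b g t * norm_b b (transl_comb g a N c) t"
proof -
  define x where "x k = cnj (g (t - of_int k / b))" for k :: int
  define z where "z n k = transl (of_int n * a) g (t - of_int k / b)" for n k :: int
  have norm_x: "(\<Sum>\<^sub>\<infinity>k. ennreal ((cmod (x k))\<^sup>2)) = norm_b b g t"
    by (simp add: x_def norm_b_def)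
  have inner: "cnj (inner_b b g (transl (of_int n * a) g) t) = (\<Sum>\<^sub>\<infinity>k. x k * z n k)" for n
    by (simp add: inner_b_def x_def z_def infsum_cnj[symmetric] del: infsum_cnj)
  have "((\<lambda>k. c n * (x k * z n k)) has_sum c n * cnj (inner_b b g (transl (of_int n * a) g) t)) UNIV"
    if "n \<in> N" for n
  proof -
    have "(\<lambda>k. norm (x k * z n k)) summable_on UNIV"
      using G G_transl[OF that] by (intro Cauchy_Schwarz_infsum_ennreal(1)) (simp_all add: norm_x z_def norm_b_def)
    then have "(\<lambda>k. x k * z n k) summable_on UNIV"
      by (rule abs_summable_summable)
    from has_sum_cmult_right[OF has_sum_infsum[OF this]] show ?thesis
      unfolding inner .
  qed
  then have "((\<lambda>k. \<Sum>n\<in>N. c n * (x k * z n k)) has_sum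
      (\<Sum>n\<in>N. c n * cnj (inner_b b g (transl (of_int n * a) g) t))) UNIV"
    by (rule has_sum_sum[OF N])
  moreover have "(\<lambda>k. \<Sum>n\<in>N. c n * (x k * z n k)) = (\<lambda>k. x k * transl_comb g a N c (t - of_int k / b))"
    by (simp add: fun_eq_iff transl_comb_def z_def sum_distrib_left mult_ac)
  ultimately have "((\<lambda>k. x k * transl_comb g a N c (t - of_int k / b)) has_sum
      (\<Sum>n\<in>N. c n * cnj (inner_b b g (transl (of_int n * a) g) t))) UNIV"
    by simp
  then have "(\<Sum>n\<in>N. c n * cnj (inner_b b g (transl (of_int n * a) g) t))
      = (\<Sum>\<^sub>\<infinity>k. x k * transl_comb g a N c (t - of_int k / b))"
    by (simp add: infsumI)
  also have "ennreal ((cmod \<dots>)\<^sup>2) \<le> norm_b b g t * norm_b b (transl_comb g a N c) t"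
    using Cauchy_Schwarz_infsum_ennreal(2)[of x "\<lambda>k. transl_comb g a N c (t - of_int k / b)"] G V
    unfolding norm_x by (simp add: norm_b_def)
  finally show ?thesis .
qed

lemma countable_Gaussian_rationals: "countable {z::complex. Re z \<in> \<rat> \<and> Im z \<in> \<rat>}"
proof -
  have "{z::complex. Re z \<in> \<rat> \<and> Im z \<in> \<rat>} = (\<lambda>(x, y). Complex x y) ` (\<rat> \<times> \<rat>)"
    by (auto simp: image_iff complex_eq_iff)
  then show ?thesis
    by (simp only:) (intro countable_image countable_SIGMA countable_rat)
qed

lemma closure_Gaussian_rationals: "closure {z::complex. Re z \<in> \<rat> \<and> Im z \<in> \<rat>} = UNIV"
proof -
  have "z \<in> closure {z::complex. Re z \<in> \<rat> \<and> Im z \<in> \<rat>}" for z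
  proof -
    obtain x where x: "\<And>n. x n \<in> \<rat>" "x \<longlonglongrightarrow> Re z"
      using closure_sequential[of "Re z" \<rat>] Rats_closure_real by auto
    obtain y where y: "\<And>n. y n \<in> \<rat>" "y \<longlonglongrightarrow> Im z"
      using closure_sequential[of "Im z" \<rat>] Rats_closure_real by auto
    have "(\<lambda>n. Complex (x n) (y n)) \<longlonglongrightarrow> Complex (Re z) (Im z)"
      by (intro tendsto_Complex x y)
    then show ?thesis
      unfolding closure_sequential using x y by (intro exI[of _ "\<lambda>n. Complex (x n) (y n)"]) auto
  qed
  then show ?thesis
    by auto
qed

text \<open>Test against coefficient vectors from D converging to H itself.\<close>
lemma sum_norm_sq_le_of_dual_bound:
  fixes H :: "'i \<Rightarrow> complex"
  assumes N: "finite N" and D: "closure D = UNIV" and K: "0 \<le> K"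
    and dual: "\<And>c. c \<in> N \<rightarrow>\<^sub>E D \<Longrightarrow> (cmod (\<Sum>n\<in>N. c n * cnj (H n)))\<^sup>2 \<le> K * (\<Sum>n\<in>N. (cmod (c n))\<^sup>2)"
  shows "(\<Sum>n\<in>N. (cmod (H n))\<^sup>2) \<le> K"
proof -
  have "\<forall>n. \<exists>s. (\<forall>j. s j \<in> D) \<and> s \<longlonglongrightarrow> H n"
    using D by (auto simp: closure_sequential[symmetric])
  then obtain s where s_in: "\<And>n j. s n j \<in> D" and s_lim: "\<And>n. s n \<longlonglongrightarrow> H n"
    by metis
  define S where "S = (\<Sum>n\<in>N. (cmod (H n))\<^sup>2)"
  have S: "0 \<le> S"
    by (simp add: S_def sum_nonneg)
  have "(cmod (\<Sum>n\<in>N. s n j * cnj (H n)))\<^sup>2 \<le> K * (\<Sum>n\<in>N. (cmod (s n j))\<^sup>2)" for j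
  proof -
    have "restrict (\<lambda>n. s n j) N \<in> N \<rightarrow>\<^sub>E D"
      by (simp add: s_in)
    from dual[OF this] show ?thesis
      by simp
  qed
  moreover have "(\<lambda>j. (cmod (\<Sum>n\<in>N. s n j * cnj (H n)))\<^sup>2) \<longlonglongrightarrow> (cmod (\<Sum>n\<in>N. H n * cnj (H n)))\<^sup>2"
    by (intro tendsto_intros s_lim)
  moreover have "(\<lambda>j. K * (\<Sum>n\<in>N. (cmod (s n j))\<^sup>2)) \<longlonglongrightarrow> K * S"
    unfolding S_def by (intro tendsto_intros s_lim)
  ultimately have "(cmod (\<Sum>n\<in>N. H n * cnj (H n)))\<^sup>2 \<le> K * S"
    by (intro LIMSEQ_le) auto
  moreover have "(\<Sum>n\<in>N. H n * cnj (H n)) = of_real S"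
    unfolding S_def of_real_sum by (simp only: complex_norm_square)
  ultimately have "S * S \<le> K * S"
    using S by (simp add: power2_eq_square)
  then show ?thesis
    using S K by (cases "S = 0") (auto simp: S_def)
qed

lemma infsum_norm_inner_b_le:
  fixes D :: "complex set"
  assumes D: "closure D = UNIV" and C: "0 \<le> C"
    and G: "norm_b b g t \<noteq> \<infinity>" and G_transl: "\<And>n. norm_b b (transl (of_int n * a) g) t \<noteq> \<infinity>"
    and bracket: "\<And>d c. c \<in> {-int d..int d} \<rightarrow>\<^sub>E D \<Longrightarrow>
      norm_b b (transl_comb g a {-int d..int d} c) t \<le> ennreal (C * (\<Sum>n\<in>{-int d..int d}. (cmod (c n))\<^sup>2))"
  shows "(\<Sum>\<^sub>\<infinity>n::int. ennreal ((cmod (inner_b b g (transl (of_int n * a) g) t))\<^sup>2)) \<le> ennreal C * norm_b b g t"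
proof -
  define H where "H n = inner_b b g (transl (of_int n * a) g) t" for n :: int
  obtain \<gamma> where \<gamma>: "norm_b b g t = ennreal \<gamma>" "0 \<le> \<gamma>"
    using G by (cases "norm_b b g t") auto
  have partial: "(\<Sum>n\<in>{-int d..int d}. (cmod (H n))\<^sup>2) \<le> C * \<gamma>" for d
  proof (rule sum_norm_sq_le_of_dual_bound[OF finite_atLeastAtMost_int D])
    fix c
    assume "c \<in> {-int d..int d} \<rightarrow>\<^sub>E D"
    note V = bracket[OF this]
    have "ennreal ((cmod (\<Sum>n\<in>{-int d..int d}. c n * cnj (H n)))\<^sup>2)
        \<le> norm_b b g t * norm_b b (transl_comb g a {-int d..int d} c) t"
      unfolding H_def using G G_transl V by (intro norm_sum_inner_b_le) (auto simp: top_unique)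
    also have "\<dots> \<le> ennreal (C * \<gamma> * (\<Sum>n\<in>{-int d..int d}. (cmod (c n))\<^sup>2))"
      using mult_left_mono[OF V, of "ennreal \<gamma>"] \<gamma> by (simp add: ennreal_mult'[symmetric] mult_ac)
    finally show "(cmod (\<Sum>n\<in>{-int d..int d}. c n * cnj (H n)))\<^sup>2 \<le> C * \<gamma> * (\<Sum>n\<in>{-int d..int d}. (cmod (c n))\<^sup>2)"
      using C \<gamma> by (simp add: ennreal_le_iff sum_nonneg)
  qed (use C \<gamma> in simp)
  have "(\<Sum>\<^sub>\<infinity>n. ennreal ((cmod (H n))\<^sup>2)) = (SUP d. ennreal (\<Sum>n\<in>{-int d..int d}. (cmod (H n))\<^sup>2))"
    by (simp add: infsum_int_ennreal_eq_SUP)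
  also have "\<dots> \<le> ennreal C * norm_b b g t"
    using partial C \<gamma> by (intro SUP_least) (simp add: ennreal_mult[symmetric] ennreal_leI)
  finally show ?thesis
    by (simp add: H_def)
qed

theorem theorem5p3:
  fixes g :: "real \<Rightarrow> complex" and a b B :: real
  assumes "g \<in> L2" and "a > 0" and "b > 0"
    and "preframe g a b B"
  shows "AE t in lebesgue.
           (\<Sum>\<^sub>\<infinity>n::int. ennreal ((cmod (inner_b b g (transl (of_int n * a) g) t))\<^sup>2))
             \<le> ennreal (b * B) * norm_b b g t"
proof -
  note g = assms(1) and b = assms(3) and pf = assms(4)
  let ?Q = "{z::complex. Re z \<in> \<rat> \<and> Im z \<in> \<rat>}"
  have "AE t in lebesgue. norm_b b g t \<noteq> \<infinity>"
    by (rule AE_norm_b_finite[OF g b])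
  moreover have "AE t in lebesgue. \<forall>n::int. norm_b b (transl (of_int n * a) g) t \<noteq> \<infinity>"
    unfolding AE_all_countable using AE_norm_b_finite[OF L2_transl[OF g] b] by blast
  moreover have "AE t in lebesgue. \<forall>d::nat. \<forall>c \<in> {-int d..int d} \<rightarrow>\<^sub>E ?Q.
      norm_b b (transl_comb g a {-int d..int d} c) t \<le> ennreal (b * max B 0 * (\<Sum>n\<in>{-int d..int d}. (cmod (c n))\<^sup>2))"
    unfolding AE_all_countable
    by (subst AE_ball_countable) (auto intro!: countable_PiE countable_Gaussian_rationals AE_norm_b_transl_comb_le[OF g pf b])
  ultimately show ?thesis
  proof eventually_elim
    case (elim t)
    have "ennreal (b * B) = ennreal (b * max B 0)"
      using b by (cases "0 \<le> B") (auto simp: ennreal_neg mult_nonneg_nonpos)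
    moreover have "(\<Sum>\<^sub>\<infinity>n::int. ennreal ((cmod (inner_b b g (transl (of_int n * a) g) t))\<^sup>2))
        \<le> ennreal (b * max B 0) * norm_b b g t"
      using elim b by (intro infsum_norm_inner_b_le[OF closure_Gaussian_rationals]) auto
    ultimately show ?case
      by simp
  qed
qed

end
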